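(* Let $f\in\mathscr{F}_r$ with $r$-decomposition $(V_i,f_i)_{i=1}^m$, let $S\subseteq V$ be nonempty, $T\subseteq V\setminus S$ and $u\in V\setminus S$. If $f^S(u\mid T)>0$, then $\{u\}$ is connected to $S$, i.e. $u$ is adjacent in $G$ to some vertex of $S$.
   Context: $V$ is a finite set. Supermodular: $g(A)+g(B)\le g(A\cup B)+g(A\cap B)$; monotone: $g(B)\le g(A)$ for $B\subseteq A$. $\mathscr{F}_r$ is the family of nonnegative monotone supermodular $f:2^V\to\mathbb{R}_+$ admitting an $r$-decomposition $(V_i,f_i)_{i=1}^m$: $V_i\subseteq V$, $|V_i|\le r$, nonnegative supermodular $f_i:2^{V_i}\to\mathbb{R}_+$, $f(S)=\sum_i f_i(S\cap V_i)$. The graph $G=(V,E)$ has $E=\bigcup_i\{uv:\{u,v\}\subseteq V_i,u\ne v\}$. For nonempty $S$: $I_S=\{i:V_i\cap S\ne\emptyset\}$, $f^S(T)=\sum_{i\in I_S}\big(f_i((S\cup T)\cap V_i)-f_i(S\cap V_i)\big)$ for $T\subseteq V\setminus S$, and $f^S(u\mid T)=f^S(T\cup\{u\})-f^S(T)$. *)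

theory Defs
  imports Complex_Main
begin

definition supermodular_on :: "'a set \<Rightarrow> ('a set \<Rightarrow> real) \<Rightarrow> bool" where
  "supermodular_on U g \<longleftrightarrow>
     (\<forall>A B. A \<subseteq> U \<longrightarrow> B \<subseteq> U \<longrightarrow> g A + g B \<le> g (A \<union> B) + g (A \<inter> B))"

definition monotone_set_fun_on :: "'a set \<Rightarrow> ('a set \<Rightarrow> real) \<Rightarrow> bool" where
  "monotone_set_fun_on U g \<longleftrightarrow> (\<forall>A B. B \<subseteq> A \<longrightarrow> A \<subseteq> U \<longrightarrow> g B \<le> g A)"

definition nonneg_on :: "'a set \<Rightarrow> ('a set \<Rightarrow> real) \<Rightarrow> bool" where
  "nonneg_on U g \<longleftrightarrow> (\<forall>A. A \<subseteq> U \<longrightarrow> 0 \<le> g A)"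

definition r_decomposition ::
  "'a set \<Rightarrow> nat \<Rightarrow> ('a set \<Rightarrow> real) \<Rightarrow> nat \<Rightarrow> (nat \<Rightarrow> 'a set) \<Rightarrow> (nat \<Rightarrow> 'a set \<Rightarrow> real) \<Rightarrow> bool" where
  "r_decomposition V r f m Vs fs \<longleftrightarrow>
     (\<forall>i<m. Vs i \<subseteq> V \<and> card (Vs i) \<le> r \<and>
            supermodular_on (Vs i) (fs i) \<and> nonneg_on (Vs i) (fs i)) \<and>
     (\<forall>S. S \<subseteq> V \<longrightarrow> f S = (\<Sum>i<m. fs i (S \<inter> Vs i)))"

definition in_F_r ::
  "'a set \<Rightarrow> nat \<Rightarrow> ('a set \<Rightarrow> real) \<Rightarrow> nat \<Rightarrow> (nat \<Rightarrow> 'a set) \<Rightarrow> (nat \<Rightarrow> 'a set \<Rightarrow> real) \<Rightarrow> bool" where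
  "in_F_r V r f m Vs fs \<longleftrightarrow>
     nonneg_on V f \<and> monotone_set_fun_on V f \<and> supermodular_on V f \<and>
     r_decomposition V r f m Vs fs"

text \<open>Edges of G: u v distinct and both in some V_i.\<close>
definition adjacent :: "nat \<Rightarrow> (nat \<Rightarrow> 'a set) \<Rightarrow> 'a \<Rightarrow> 'a \<Rightarrow> bool" where
  "adjacent m Vs u v \<longleftrightarrow> u \<noteq> v \<and> (\<exists>i<m. u \<in> Vs i \<and> v \<in> Vs i)"

definition I_S :: "nat \<Rightarrow> (nat \<Rightarrow> 'a set) \<Rightarrow> 'a set \<Rightarrow> nat set" where
  "I_S m Vs S = {i. i < m \<and> Vs i \<inter> S \<noteq> {}}"

definition fS :: "nat \<Rightarrow> (nat \<Rightarrow> 'a set) \<Rightarrow> (nat \<Rightarrow> 'a set \<Rightarrow> real) \<Rightarrow> 'a set \<Rightarrow> 'a set \<Rightarrow> real" where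
  "fS m Vs fs S T = (\<Sum>i\<in>I_S m Vs S. fs i ((S \<union> T) \<inter> Vs i) - fs i (S \<inter> Vs i))"

definition fS_marg :: "nat \<Rightarrow> (nat \<Rightarrow> 'a set) \<Rightarrow> (nat \<Rightarrow> 'a set \<Rightarrow> real) \<Rightarrow> 'a set \<Rightarrow> 'a \<Rightarrow> 'a set \<Rightarrow> real" where
  "fS_marg m Vs fs S u T = fS m Vs fs S (T \<union> {u}) - fS m Vs fs S T"

end

theory Submission
  imports Defs
begin

(* Only the blocks V_i meeting S contribute to f^S. If u is adjacent to no vertex of S,
   then u lies in none of these blocks, so adding u to T changes no term of f^S and
   the marginal gain f^S(u | T) is zero. *)

lemma notin_block_of_I_S:
  assumes "u \<notin> S" and "\<not> (\<exists>v\<in>S. adjacent m Vs u v)" and "i \<in> I_S m Vs S"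
  shows "u \<notin> Vs i"
proof
  assume "u \<in> Vs i"
  moreover obtain v where "v \<in> Vs i" "v \<in> S" "i < m"
    using assms(3) unfolding I_S_def by blast
  ultimately have "adjacent m Vs u v"
    using assms(1) unfolding adjacent_def by blast
  with assms(2) \<open>v \<in> S\<close> show False by blast
qed

lemma fS_marg_eq_0_if_notin_blocks:
  assumes "\<And>i. i \<in> I_S m Vs S \<Longrightarrow> u \<notin> Vs i"
  shows "fS_marg m Vs fs S u T = 0"
proof -
  have "(S \<union> (T \<union> {u})) \<inter> Vs i = (S \<union> T) \<inter> Vs i" if "i \<in> I_S m Vs S" for i
    using assms[OF that] by blast
  then have "fS m Vs fs S (T \<union> {u}) = fS m Vs fs S T"
    unfolding fS_def by (intro sum.cong) simp_all
  then show ?thesis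
    unfolding fS_marg_def by simp
qed

theorem lemma4:
  fixes V :: "'a set" and r m :: nat and f :: "'a set \<Rightarrow> real"
    and Vs :: "nat \<Rightarrow> 'a set" and fs :: "nat \<Rightarrow> 'a set \<Rightarrow> real"
    and S T :: "'a set" and u :: 'a
  assumes "finite V"
    and "in_F_r V r f m Vs fs"
    and "S \<subseteq> V" and "S \<noteq> {}"
    and "T \<subseteq> V - S"
    and "u \<in> V - S"
    and "fS_marg m Vs fs S u T > 0"
  shows "\<exists>v\<in>S. adjacent m Vs u v"
proof (rule ccontr)
  assume "\<not> (\<exists>v\<in>S. adjacent m Vs u v)"
  moreover have "u \<notin> S"
    using assms(6) by blast
  ultimately have "fS_marg m Vs fs S u T = 0"
    by (intro fS_marg_eq_0_if_notin_blocks notin_block_of_I_S)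
  with assms(7) show False
    by simp
qed

end
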